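(* Let $\mathsf P'\subset\mathbb R^m$ be a $(\mu',\epsilon')$-net, $0<\Gamma_0\le1$, $\delta_0\ge0$, and $\delta=\delta_0\mu'\epsilon'$. If some $m$-simplex $\sigma^m\in\mathrm{Del}_{D_{\epsilon'}}(\mathsf P')$ is not $\delta$-protected, then $\mathsf P'$ contains a forbidden configuration (with parameters $\mu',\epsilon',\delta_0,\Gamma_0$). Likewise, if some $m$-simplex $\sigma^m\in\mathrm{Del}_{D_{\epsilon'}}(\mathsf P')$ is not $\Gamma_0$-good, then $\mathsf P'$ contains a forbidden configuration.
   Context: Let $d(x,X)$ denote Euclidean distance from a point to a set; $B(c,r)$ is the open ball. For a finite $\mathsf P\subset\mathbb R^m$ and $\epsilon>0$, $\mathsf P$ is $\epsilon$-dense if $d(x,\mathsf P\cup\partial\,\mathrm{conv}(\mathsf P))<\epsilon$ for every $x\in\mathrm{conv}(\mathsf P)$; it is $\mu\epsilon$-separated if $\|p-q\|\ge\mu\epsilon$ for all distinct $p,q\in\mathsf P$. For $0<\mu\le1$, $\mathsf P$ is a $(\mu,\epsilon)$-net if it is $\epsilon$-dense and $\mu\epsilon$-separated. $D_\epsilon(\mathsf P)=\{x\in\mathrm{conv}(\mathsf P): d(x,\partial\,\mathrm{conv}(\mathsf P))\ge\epsilon\}$. A simplex is a nonempty finite subset $\sigma\subset\mathbb R^m$ (vertices need not be affinely independent); $\dim\sigma=|\sigma|-1$; faces are nonempty subsets. For $p\in\sigma$, $\sigma_p=\sigma\setminus\{p\}$. $L(\sigma)$ is the largest distance between vertices. Altitude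 $D(p,\sigma)=d(p,\mathrm{aff}(\sigma_p))$. Thickness of a $j$-simplex: $\Upsilon(\sigma)=1$ if $j=0$, else $\min_{p}D(p,\sigma)/(jL(\sigma))$. $\sigma$ is $\Gamma_0$-good if every $j$-face $\sigma^j$ satisfies $\Upsilon(\sigma^j)\ge\Gamma_0^j$; $\Gamma_0$-bad otherwise; a $\Gamma_0$-flake is a $\Gamma_0$-bad simplex whose proper faces are all $\Gamma_0$-good. A circumscribing ball of $\sigma$ is an open ball whose boundary contains all vertices of $\sigma$. A Delaunay ball for finite $\mathsf P$ is an open ball $B(x,r)$ containing no point of $\mathsf P$ such that every open ball centred at $x$ containing no point of $\mathsf P$ is contained in $B(x,r)$. $\sigma\subseteq\mathsf P$ is Delaunay if its vertices lie on $\partial B$ for some Delaunay ball $B$. $\mathrm{Del}_{D_\epsilon}(\mathsf P)$ is the set of Delaunay simplices having a Delaunay ball centred in $D_\epsilon(\mathsf P)$. A Delaunay simplex $\sigma$ is $\delta$-protected if it has a Delaunay ball $B$ with $d(q,\partial B)>\delta$ for all $q\in\mathsf P\setminus\sigma$. Forbidden configuration: given a finite $\mathsf P'\subset\mathbb R^m$ and parameters $\mu',\epsilon'>0$, $0<\Gamma_0\le1$, $\delta_0\ge0$, a $(k+1)$-simplex $\tau\subseteq\mathsf P'$ with $k\le m$ is a forbidden configuration if it is a $\Gamma_0$-flake and there exist $p\in\tau$ and a circumscribing ball $B(C,R)$ of $\tau_p$ with $R<\epsilon'$ and $\big|\,\|p-C\|-R\,\big|\le\delta_0\mu'\epsilon'$;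 it is then said to be certified by $p$ and $B(C,R)$. *)

theory Defs
  imports "HOL-Analysis.Analysis"
begin

text \<open>Ambient space R^m is modelled by a Euclidean space type 'a with m = DIM('a).
  Distance from a point to a set is infdist.\<close>

definition eps_dense :: "real \<Rightarrow> 'a::euclidean_space set \<Rightarrow> bool" where
  "eps_dense \<epsilon> P \<longleftrightarrow>
     (\<forall>x \<in> convex hull P. infdist x (P \<union> frontier (convex hull P)) < \<epsilon>)"

definition separated :: "real \<Rightarrow> 'a::euclidean_space set \<Rightarrow> bool" where
  "separated s P \<longleftrightarrow> (\<forall>p\<in>P. \<forall>q\<in>P. p \<noteq> q \<longrightarrow> dist p q \<ge> s)"

definition is_net :: "real \<Rightarrow> real \<Rightarrow> 'a::euclidean_space set \<Rightarrow> bool" where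
  "is_net \<mu> \<epsilon> P \<longleftrightarrow> finite P \<and> \<epsilon> > 0 \<and> 0 < \<mu> \<and> \<mu> \<le> 1 \<and>
      eps_dense \<epsilon> P \<and> separated (\<mu> * \<epsilon>) P"

definition D_eps :: "real \<Rightarrow> 'a::euclidean_space set \<Rightarrow> 'a set" where
  "D_eps \<epsilon> P = {x \<in> convex hull P. infdist x (frontier (convex hull P)) \<ge> \<epsilon>}"

text \<open>Simplices: nonempty finite subsets; dimension = card - 1.\<close>

definition longest_edge :: "'a::euclidean_space set \<Rightarrow> real" where
  "longest_edge \<sigma> = Max ((\<lambda>(p,q). dist p q) ` (\<sigma> \<times> \<sigma>))"

definition altitude :: "'a::euclidean_space \<Rightarrow> 'a set \<Rightarrow> real" where
  "altitude p \<sigma> = infdist p (affine hull (\<sigma> - {p}))"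

definition thickness :: "'a::euclidean_space set \<Rightarrow> real" where
  "thickness \<sigma> = (if card \<sigma> - 1 = 0 then 1
      else Min ((\<lambda>p. altitude p \<sigma>) ` \<sigma>) / (real (card \<sigma> - 1) * longest_edge \<sigma>))"

definition good :: "real \<Rightarrow> 'a::euclidean_space set \<Rightarrow> bool" where
  "good \<Gamma>\<^sub>0 \<sigma> \<longleftrightarrow> (\<forall>\<tau>. \<tau> \<subseteq> \<sigma> \<and> \<tau> \<noteq> {} \<longrightarrow> thickness \<tau> \<ge> \<Gamma>\<^sub>0 ^ (card \<tau> - 1))"

definition flake :: "real \<Rightarrow> 'a::euclidean_space set \<Rightarrow> bool" where
  "flake \<Gamma>\<^sub>0 \<sigma> \<longleftrightarrow> \<not> good \<Gamma>\<^sub>0 \<sigma> \<and> (\<forall>\<tau>. \<tau> \<subset> \<sigma> \<and> \<tau> \<noteq> {} \<longrightarrow> good \<Gamma>\<^sub>0 \<tau>)"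

definition circumscribing_ball :: "'a::euclidean_space set \<Rightarrow> 'a \<Rightarrow> real \<Rightarrow> bool" where
  "circumscribing_ball \<sigma> c r \<longleftrightarrow> \<sigma> \<subseteq> frontier (ball c r)"

definition delaunay_ball :: "'a::euclidean_space set \<Rightarrow> 'a \<Rightarrow> real \<Rightarrow> bool" where
  "delaunay_ball P x r \<longleftrightarrow> ball x r \<inter> P = {} \<and>
      (\<forall>r'. ball x r' \<inter> P = {} \<longrightarrow> ball x r' \<subseteq> ball x r)"

definition delaunay_ball_of :: "'a::euclidean_space set \<Rightarrow> 'a set \<Rightarrow> 'a \<Rightarrow> real \<Rightarrow> bool" where
  "delaunay_ball_of P \<sigma> x r \<longleftrightarrow> delaunay_ball P x r \<and> \<sigma> \<subseteq> frontier (ball x r)"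

definition Del_D :: "real \<Rightarrow> 'a::euclidean_space set \<Rightarrow> 'a set set" where
  "Del_D \<epsilon> P = {\<sigma>. \<sigma> \<subseteq> P \<and> \<sigma> \<noteq> {} \<and>
      (\<exists>x r. delaunay_ball_of P \<sigma> x r \<and> x \<in> D_eps \<epsilon> P)}"

definition protected :: "real \<Rightarrow> 'a::euclidean_space set \<Rightarrow> 'a set \<Rightarrow> bool" where
  "protected \<delta> P \<sigma> \<longleftrightarrow> \<sigma> \<subseteq> P \<and> \<sigma> \<noteq> {} \<and>
      (\<exists>x r. delaunay_ball_of P \<sigma> x r \<and>
         (\<forall>q \<in> P - \<sigma>. infdist q (frontier (ball x r)) > \<delta>))"

definition forbidden_config ::
  "real \<Rightarrow> real \<Rightarrow> real \<Rightarrow> real \<Rightarrow> 'a::euclidean_space set \<Rightarrow> 'a set \<Rightarrow> bool" where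
  "forbidden_config \<mu>' \<epsilon>' \<delta>\<^sub>0 \<Gamma>\<^sub>0 P' \<tau> \<longleftrightarrow>
     \<tau> \<subseteq> P' \<and> finite \<tau> \<and> (\<exists>k. k \<le> DIM('a) \<and> card \<tau> = k + 2) \<and> flake \<Gamma>\<^sub>0 \<tau> \<and>
     (\<exists>p\<in>\<tau>. \<exists>C R. circumscribing_ball (\<tau> - {p}) C R \<and> R < \<epsilon>' \<and>
         \<bar>dist p C - R\<bar> \<le> \<delta>\<^sub>0 * \<mu>' * \<epsilon>')"

end

theory Submission
  imports Defs
begin

text \<open>Both failures produce a set of at most m + 2 net points that is not \<open>\<Gamma>\<^sub>0\<close>-good and lies on
  the Delaunay sphere, except possibly for one point within \<open>\<delta>\<close> of it: a non-protected
  simplex together with its intruding point has m + 2 vertices and is affinely dependent, hence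
  of thickness 0; a bad m-simplex lies on its sphere anyway. A minimal bad subset of such a set
  is a flake, and the Delaunay sphere, whose radius is below \<open>\<epsilon>'\<close> by density of the net,
  certifies it as a forbidden configuration.\<close>

lemma good_singleton: "good \<Gamma> {a}"
proof -
  have "\<tau> = {a}" if "\<tau> \<subseteq> {a}" "\<tau> \<noteq> {}" for \<tau> :: "'a set" using that by blast
  moreover have "thickness {a} \<ge> \<Gamma> ^ (card {a} - 1)" by (simp add: thickness_def)
  ultimately show ?thesis unfolding good_def by metis
qed

lemma not_good_obtains_flake:
  assumes "finite S" "\<not> good \<Gamma> S"
  obtains \<tau> where "\<tau> \<subseteq> S" "flake \<Gamma> \<tau>" "card \<tau> \<ge> 2"
proof -
  define bad where "bad = (\<lambda>\<tau>. \<tau> \<subseteq> S \<and> \<tau> \<noteq> {} \<and> \<not> good \<Gamma> \<tau>)"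
  have "bad S" using assms unfolding bad_def good_def by auto
  then obtain \<tau> where \<tau>: "bad \<tau>" and minimal: "\<And>\<rho>. bad \<rho> \<Longrightarrow> card \<tau> \<le> card \<rho>"
    using ex_has_least_nat[of bad S card] by blast
  have fin: "finite \<tau>" using \<tau> assms(1) finite_subset unfolding bad_def by blast
  have "good \<Gamma> \<rho>" if "\<rho> \<subset> \<tau>" "\<rho> \<noteq> {}" for \<rho>
    using that minimal[of \<rho>] psubset_card_mono[OF fin, of \<rho>] \<tau> unfolding bad_def by fastforce
  then have "flake \<Gamma> \<tau>" using \<tau> unfolding flake_def bad_def by blast
  moreover have "card \<tau> \<ge> 2"
  proof (rule ccontr)
    assume "\<not> card \<tau> \<ge> 2"
    moreover have "card \<tau> \<noteq> 0" using fin \<tau> unfolding bad_def by auto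
    ultimately obtain a where "\<tau> = {a}"
      using card_1_singletonE by (metis One_nat_def Suc_1 less_2_cases not_less)
    then show False using \<tau> good_singleton unfolding bad_def by metis
  qed
  ultimately show thesis using that \<tau> unfolding bad_def by blast
qed

lemma affine_dependent_not_good:
  fixes S :: "'a::euclidean_space set"
  assumes "finite S" "affine_dependent S" "0 < \<Gamma>"
  shows "\<not> good \<Gamma> S"
proof -
  obtain p where p: "p \<in> S" "p \<in> affine hull (S - {p})"
    using assms(2) unfolding affine_dependent_def by blast
  have "S - {p} \<noteq> {}" using p(2) by (metis affine_hull_empty empty_iff)
  then have "card (S - {p}) > 0" using assms(1) by (simp add: card_gt_0_iff)
  then have "card S \<ge> 2" using p(1) assms(1) by (simp add: card_Diff_singleton)
  have "altitude p S = 0" using p unfolding altitude_def by simp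
  then have min_altitude: "Min ((\<lambda>p. altitude p S) ` S) \<le> 0"
    using Min_le[of "(\<lambda>p. altitude p S) ` S" 0] assms(1) p(1) by force
  have "dist p p \<in> (\<lambda>(p,q). dist p q) ` (S \<times> S)" using p(1) by force
  then have "0 \<le> longest_edge S" unfolding longest_edge_def
    using Max_ge[of "(\<lambda>(p,q). dist p q) ` (S \<times> S)" "dist p p"] assms(1) by simp
  then have "thickness S \<le> 0"
    using min_altitude \<open>card S \<ge> 2\<close> unfolding thickness_def
    by (simp add: divide_nonpos_nonneg)
  moreover have "0 < \<Gamma> ^ (card S - 1)" using assms(3) by simp
  ultimately show ?thesis unfolding good_def using p(1) by force
qed

lemma card_eq_DIM_plus_2_not_good:
  fixes S :: "'a::euclidean_space set"
  assumes "finite S" "card S = DIM('a) + 2" "0 < \<Gamma>"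
  shows "\<not> good \<Gamma> S"
  using affine_dependent_not_good affine_dependent_biggerset assms by fastforce

lemma delaunay_ball_of_sphere:
  assumes "delaunay_ball_of P \<sigma> x r" "\<sigma> \<noteq> {}"
  shows "0 < r" "\<sigma> \<subseteq> sphere x r" "\<And>q. q \<in> P \<Longrightarrow> r \<le> dist x q"
proof -
  show "0 < r"
    using assms frontier_empty[where 'a='a] unfolding delaunay_ball_of_def
    by (metis ball_eq_empty not_less subset_empty)
  then show "\<sigma> \<subseteq> sphere x r" using assms(1) unfolding delaunay_ball_of_def by simp
  show "r \<le> dist x q" if "q \<in> P" for q
    using assms(1) that unfolding delaunay_ball_of_def delaunay_ball_def by force
qed

text \<open>The centre lies in \<open>D\<^sub>\<epsilon>\<close>, so its distance to the boundary of the hull is at least \<open>\<epsilon>\<close>;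
  density then forces a net point strictly closer than \<open>\<epsilon>\<close>, and the ball is empty.\<close>
lemma Del_D_radius_less:
  assumes net: "is_net \<mu> \<epsilon> P" and \<sigma>: "\<sigma> \<in> Del_D \<epsilon> P"
  obtains x r where "delaunay_ball_of P \<sigma> x r" "0 < r" "r < \<epsilon>"
proof -
  obtain x r where ball: "delaunay_ball_of P \<sigma> x r" and centre: "x \<in> D_eps \<epsilon> P"
    and "\<sigma> \<subseteq> P" "\<sigma> \<noteq> {}"
    using \<sigma> unfolding Del_D_def by blast
  then have P_ne: "P \<noteq> {}" by blast
  note sphere = delaunay_ball_of_sphere[OF ball \<open>\<sigma> \<noteq> {}\<close>]
  have eps: "\<epsilon> > 0" and dense: "eps_dense \<epsilon> P" using net unfolding is_net_def by auto
  have x_hull: "x \<in> convex hull P" and x_far: "infdist x (frontier (convex hull P)) \<ge> \<epsilon>"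
    using centre unfolding D_eps_def by auto
  have F_ne: "frontier (convex hull P) \<noteq> {}"
    using x_far eps by (auto simp: infdist_def)
  have "infdist x (P \<union> frontier (convex hull P)) < \<epsilon>"
    using dense x_hull unfolding eps_dense_def by blast
  then have "min (infdist x P) (infdist x (frontier (convex hull P))) < \<epsilon>"
    using infdist_Un_min[OF P_ne F_ne] by simp
  then have "infdist x P < \<epsilon>" using x_far by linarith
  moreover have "r \<le> infdist x P"
    unfolding infdist_notempty[OF P_ne] by (rule cINF_greatest[OF P_ne]) (use sphere(3) in auto)
  ultimately show thesis using that ball sphere(1) by fastforce
qed

lemma infdist_sphere_ge:
  fixes q x :: "'a::euclidean_space"
  assumes "0 < r"
  shows "dist q x - r \<le> infdist q (sphere x r)"
proof -
  have ne: "sphere x r \<noteq> {}" using assms by simp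
  show ?thesis unfolding infdist_notempty[OF ne]
  proof (rule cINF_greatest[OF ne])
    fix a assume "a \<in> sphere x r"
    then show "dist q x - r \<le> dist q a"
      using dist_triangle[of q x a] by (simp add: dist_commute)
  qed
qed

lemma not_protected_near_point:
  assumes ball: "delaunay_ball_of P \<sigma> x r" and "\<sigma> \<subseteq> P" "\<sigma> \<noteq> {}" "\<not> protected \<delta> P \<sigma>"
  obtains q where "q \<in> P - \<sigma>" "\<bar>dist q x - r\<bar> \<le> \<delta>"
proof -
  note sphere = delaunay_ball_of_sphere[OF ball \<open>\<sigma> \<noteq> {}\<close>]
  obtain q where q: "q \<in> P - \<sigma>" "infdist q (frontier (ball x r)) \<le> \<delta>"
    using assms unfolding protected_def by (meson not_less)
  then have "dist q x - r \<le> \<delta>" using infdist_sphere_ge[of r q x] sphere(1) by simp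
  moreover have "r \<le> dist q x" using sphere(3) q(1) by (simp add: dist_commute)
  ultimately show thesis using that q(1) by simp
qed

lemma forbidden_config_from_near_sphere:
  fixes S :: "'a::euclidean_space set"
  assumes "S \<subseteq> P'" "finite S" "card S \<le> DIM('a) + 2" "\<not> good \<Gamma>\<^sub>0 S"
    and on_sphere: "S - {q} \<subseteq> sphere x r" and near: "\<bar>dist q x - r\<bar> \<le> \<delta>\<^sub>0 * \<mu>' * \<epsilon>'"
    and "0 < r" "r < \<epsilon>'"
  shows "\<exists>\<tau>. forbidden_config \<mu>' \<epsilon>' \<delta>\<^sub>0 \<Gamma>\<^sub>0 P' \<tau>"
proof -
  obtain \<tau> where \<tau>: "\<tau> \<subseteq> S" "flake \<Gamma>\<^sub>0 \<tau>" "card \<tau> \<ge> 2"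
    using not_good_obtains_flake[OF assms(2,4)] by blast
  have "finite \<tau>" using \<tau>(1) assms(2) finite_subset by blast
  have "card \<tau> \<le> DIM('a) + 2" using card_mono[OF assms(2) \<tau>(1)] assms(3) by simp
  then have dim: "\<exists>k. k \<le> DIM('a) \<and> card \<tau> = k + 2"
    using \<tau>(3) by (intro exI[of _ "card \<tau> - 2"]) linarith
  obtain p where p: "p \<in> \<tau>" "q \<in> \<tau> \<Longrightarrow> p = q"
  proof (cases "q \<in> \<tau>")
    case False
    then show thesis using that \<tau>(3) by (metis card.empty ex_in_conv not_numeral_le_zero)
  qed (use that in blast)
  have "\<tau> - {p} \<subseteq> frontier (ball x r)" using \<tau>(1) on_sphere p \<open>0 < r\<close> by auto
  then have circ: "circumscribing_ball (\<tau> - {p}) x r" unfolding circumscribing_ball_def .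
  have "0 \<le> \<delta>\<^sub>0 * \<mu>' * \<epsilon>'" using near by linarith
  then have "\<bar>dist p x - r\<bar> \<le> \<delta>\<^sub>0 * \<mu>' * \<epsilon>'"
    using near p \<tau>(1) on_sphere by (cases "p = q") (auto simp: dist_commute)
  then have "forbidden_config \<mu>' \<epsilon>' \<delta>\<^sub>0 \<Gamma>\<^sub>0 P' \<tau>"
    unfolding forbidden_config_def using \<tau> assms(1) \<open>finite \<tau>\<close> dim p(1) circ \<open>r < \<epsilon>'\<close> by blast
  then show ?thesis ..
qed

theorem mainTheorem6:
  fixes P' :: "'a::euclidean_space set"
    and \<mu>' \<epsilon>' \<Gamma>\<^sub>0 \<delta>\<^sub>0 \<delta> :: real
  assumes net: "is_net \<mu>' \<epsilon>' P'"
    and G: "0 < \<Gamma>\<^sub>0" "\<Gamma>\<^sub>0 \<le> 1"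
    and d0: "\<delta>\<^sub>0 \<ge> 0"
    and d: "\<delta> = \<delta>\<^sub>0 * \<mu>' * \<epsilon>'"
  shows "((\<exists>\<sigma> \<in> Del_D \<epsilon>' P'. card \<sigma> = DIM('a) + 1 \<and> \<not> protected \<delta> P' \<sigma>)
            \<longrightarrow> (\<exists>\<tau>. forbidden_config \<mu>' \<epsilon>' \<delta>\<^sub>0 \<Gamma>\<^sub>0 P' \<tau>))
       \<and> ((\<exists>\<sigma> \<in> Del_D \<epsilon>' P'. card \<sigma> = DIM('a) + 1 \<and> \<not> good \<Gamma>\<^sub>0 \<sigma>)
            \<longrightarrow> (\<exists>\<tau>. forbidden_config \<mu>' \<epsilon>' \<delta>\<^sub>0 \<Gamma>\<^sub>0 P' \<tau>))"
proof (intro conjI impI; elim bexE conjE)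
  fix \<sigma> assume \<sigma>: "\<sigma> \<in> Del_D \<epsilon>' P'" "card \<sigma> = DIM('a) + 1"
  then have \<sigma>P: "\<sigma> \<subseteq> P'" "\<sigma> \<noteq> {}" "finite \<sigma>"
    using net finite_subset unfolding Del_D_def is_net_def by auto
  obtain x r where ball: "delaunay_ball_of P' \<sigma> x r" "0 < r" "r < \<epsilon>'"
    using Del_D_radius_less[OF net \<sigma>(1)] .
  have sphere: "\<sigma> \<subseteq> sphere x r" using delaunay_ball_of_sphere[OF ball(1) \<sigma>P(2)] by blast
  {
    assume "\<not> protected \<delta> P' \<sigma>"
    then obtain q where q: "q \<in> P' - \<sigma>" "\<bar>dist q x - r\<bar> \<le> \<delta>"
      using not_protected_near_point ball(1) \<sigma>P by blast
    have "card (insert q \<sigma>) = DIM('a) + 2" using q(1) \<sigma> \<sigma>P(3) by simp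
    then show "\<exists>\<tau>. forbidden_config \<mu>' \<epsilon>' \<delta>\<^sub>0 \<Gamma>\<^sub>0 P' \<tau>"
      using forbidden_config_from_near_sphere[of "insert q \<sigma>" P' \<Gamma>\<^sub>0 q x r \<delta>\<^sub>0 \<mu>' \<epsilon>']
        card_eq_DIM_plus_2_not_good[of "insert q \<sigma>" \<Gamma>\<^sub>0] \<sigma>P q sphere ball G(1) d by auto
  next
    assume "\<not> good \<Gamma>\<^sub>0 \<sigma>"
    obtain q where "q \<in> \<sigma>" using \<sigma>P(2) by blast
    then have "\<bar>dist q x - r\<bar> \<le> \<delta>\<^sub>0 * \<mu>' * \<epsilon>'"
      using sphere d0 net unfolding is_net_def by (auto simp: dist_commute)
    then show "\<exists>\<tau>. forbidden_config \<mu>' \<epsilon>' \<delta>\<^sub>0 \<Gamma>\<^sub>0 P' \<tau>"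
      using forbidden_config_from_near_sphere[of \<sigma> P' \<Gamma>\<^sub>0 q x r \<delta>\<^sub>0 \<mu>' \<epsilon>'] \<sigma>(2) \<sigma>P sphere ball
        \<open>\<not> good \<Gamma>\<^sub>0 \<sigma>\<close> by auto
  }
qed

end
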